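(* Let $T=\{\!\{T_1,\dots,T_m\}\!\}$ where each $T_j$ is a $G_j$-join tree with $G_j$ a finite subgraph of $\mathsf{Path}_{\mathbb Z}$. Then for every $j\in[m]$, \[\Psi(T)\ge\Psi(T_j)+\vec\Delta(G_1,\dots,G_m\mid G_j).\]
   Context: Graphs are finite simple graphs without isolated vertices; $\emptyset$ is the empty graph. $\mathsf{Path}_{\mathbb Z}$ has vertex set $\mathbb Z$ and edges $\{i-1,i\}$. $\Delta(G)$ = number of connected components; $G\ominus F$ = union of components of $G$ sharing no vertex with $F$; $\vec\Delta(H_1,\dots,H_r\mid F)=\sum_{l=1}^r\Delta(H_l\ominus(F\cup H_1\cup\dots\cup H_{l-1}))$, $\vec\Delta(H_1,\dots,H_r)=\vec\Delta(H_1,\dots,H_r\mid\emptyset)$. Join trees: for finite $G\subset\mathsf{Path}_{\mathbb Z}$, a $G$-join tree is a finite rooted binary tree (each non-leaf has an ordered left and right child) with nodes labeled by subgraphs of $G$: leaves by single-edge subgraphs of $G$ or $\emptyset$, each non-leaf by the union of its children's labels, the root by $G$. $T_1\cup T_2$ is the join tree with a new root whose left subtree is $T_1$ and right subtree $T_2$. $\{\!\{T_1\}\!\}=T_1$ and $\{\!\{T_1,\dots,T_m\}\!\}=\{\!\{T_1,\dots,T_{m-1}\}\!\}\cup\{\!\{T_1,\dots,T_{m-2},T_m\}\!\}$ for $m\ge2$. For a $G$-join tree $S$ and a root-to-leaf path $b_1,\dots,b_\ell$, let $B_j$ ($j<\ell$) be the label of the child of $b_j$ other than $b_{j+1}$ and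 $B_\ell$ the label of leaf $b_\ell$; $\{B_1,\dots,B_\ell\}$ is an $S$-branch covering. $\Psi(S)$ is the maximum of $\vec\Delta(C_1,\dots,C_r)$ over all $S$-branch coverings $\mathcal C$ and all enumerations $C_1,\dots,C_r$ (without repetition) of $\mathcal C$. *)

theory Defs
  imports Main
begin

text \<open>A finite subgraph of Path_Z without isolated vertices is determined by its edge set.
  The edge {i-1,i} is encoded by the integer i; a graph is a set of such edge codes.\<close>

type_synonym pgraph = "int set"

definition edge_verts :: "int \<Rightarrow> int set" where
  "edge_verts i = {i - 1, i}"

definition verts :: "pgraph \<Rightarrow> int set" where
  "verts G = (\<Union>i\<in>G. edge_verts i)"

definition share :: "pgraph \<Rightarrow> (int \<times> int) set" where
  "share G = {(i, j). i \<in> G \<and> j \<in> G \<and> edge_verts i \<inter> edge_verts j \<noteq> {}}"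

definition component :: "pgraph \<Rightarrow> int \<Rightarrow> pgraph" where
  "component G i = {j. (i, j) \<in> (share G)\<^sup>*}"

definition components :: "pgraph \<Rightarrow> pgraph set" where
  "components G = component G ` G"

definition ncomp :: "pgraph \<Rightarrow> nat" where
  "ncomp G = card (components G)"

definition ominus :: "pgraph \<Rightarrow> pgraph \<Rightarrow> pgraph" where
  "ominus G F = \<Union>{C \<in> components G. verts C \<inter> verts F = {}}"

fun vDelta :: "pgraph list \<Rightarrow> pgraph \<Rightarrow> nat" where
  "vDelta [] F = 0"
| "vDelta (H # Hs) F = ncomp (ominus H F) + vDelta Hs (F \<union> H)"

datatype jtree = Leaf "int option" | Node jtree jtree

fun label :: "jtree \<Rightarrow> pgraph" where
  "label (Leaf None) = {}"
| "label (Leaf (Some i)) = {i}"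
| "label (Node l r) = label l \<union> label r"

definition is_join_tree :: "pgraph \<Rightarrow> jtree \<Rightarrow> bool" where
  "is_join_tree G T \<longleftrightarrow> label T = G"

function jt :: "jtree list \<Rightarrow> jtree" where
  "jt [] = Leaf None"
| "jt [t] = t"
| "jt (t1 # t2 # ts) =
     Node (jt (butlast (t1 # t2 # ts)))
          (jt (butlast (butlast (t1 # t2 # ts)) @ [last (t1 # t2 # ts)]))"
  by pat_completeness auto
termination by (relation "measure length") auto

fun branches :: "jtree \<Rightarrow> pgraph list set" where
  "branches (Leaf x) = {[label (Leaf x)]}"
| "branches (Node l r) =
     {label r # bs | bs. bs \<in> branches l} \<union> {label l # bs | bs. bs \<in> branches r}"

definition Psi :: "jtree \<Rightarrow> nat" where
  "Psi S = Max {vDelta Cs {} | Cs bs. bs \<in> branches S \<and> distinct Cs \<and> set Cs = set bs}"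

end

theory Submission
  imports Defs
begin

text \<open>Take an enumeration of a branch covering of a subtree \<open>l\<close> attaining \<open>\<Psi>(l)\<close>;
  extending the branch by the sibling \<open>r\<close> of \<open>l\<close> and appending \<open>label r\<close> to the enumeration
  shows \<open>\<Psi>(l \<union> r) \<ge> \<Psi>(l) + \<Delta>(label r \<ominus> label l)\<close>, and symmetrically with \<open>l\<close> and \<open>r\<close>
  exchanged. The two subtrees of \<open>{{T_1, ..., T_m}}\<close> are \<open>{{T_1, ..., T_(m-1)}}\<close> and
  \<open>{{T_1, ..., T_(m-2), T_m}}\<close>; their labels differ from \<open>G_(m-1)\<close> and \<open>G_m\<close> only by the
  common part \<open>G_1 \<union> ... \<union> G_(m-2)\<close>, which is already covered and hence invisible to \<open>\<ominus>\<close>.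
  So each step of an induction on \<open>m\<close> contributes exactly one summand of
  \<open>\<Delta>(G_1, ..., G_m | G_j)\<close>.\<close>

lemma sym_share: "sym (share G)"
  unfolding share_def sym_def by auto

lemma self_in_component: "i \<in> component G i"
  unfolding component_def by simp

lemma component_subset: "i \<in> G \<Longrightarrow> component G i \<subseteq> G"
proof
  fix j assume "i \<in> G" "j \<in> component G i"
  then have "(i, j) \<in> (share G)\<^sup>*" "i \<in> G" unfolding component_def by auto
  then show "j \<in> G"
    by (induction rule: rtrancl_induct) (auto simp: share_def)
qed

lemma component_eq: "j \<in> component G i \<Longrightarrow> component G j = component G i"
proof -
  assume "j \<in> component G i"
  then have "(i, j) \<in> (share G)\<^sup>*" "(j, i) \<in> (share G)\<^sup>*"
    using symD[OF sym_rtrancl[OF sym_share]] unfolding component_def by auto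
  then show ?thesis
    unfolding component_def by (auto intro: rtrancl_trans)
qed

lemma component_mono: "G \<subseteq> H \<Longrightarrow> component G i \<subseteq> component H i"
proof -
  assume "G \<subseteq> H"
  then have "share G \<subseteq> share H" unfolding share_def by auto
  then show ?thesis unfolding component_def using rtrancl_mono by blast
qed

lemma edge_verts_subset_verts: "i \<in> G \<Longrightarrow> edge_verts i \<subseteq> verts G"
  unfolding verts_def by auto

lemma edge_verts_nonempty: "edge_verts i \<noteq> {}"
  unfolding edge_verts_def by simp

lemma verts_mono: "G \<subseteq> H \<Longrightarrow> verts G \<subseteq> verts H"
  unfolding verts_def by auto

lemma mem_ominus_iff:
  "i \<in> ominus G F \<longleftrightarrow> i \<in> G \<and> verts (component G i) \<inter> verts F = {}"
proof
  assume "i \<in> ominus G F"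
  then obtain k where k: "k \<in> G" "i \<in> component G k" "verts (component G k) \<inter> verts F = {}"
    unfolding ominus_def components_def by auto
  then show "i \<in> G \<and> verts (component G i) \<inter> verts F = {}"
    using component_eq[OF k(2)] component_subset[OF k(1)] by auto
next
  assume "i \<in> G \<and> verts (component G i) \<inter> verts F = {}"
  then show "i \<in> ominus G F"
    unfolding ominus_def components_def using self_in_component by blast
qed

lemma ominus_eq_empty_if_subset: "G \<subseteq> F \<Longrightarrow> ominus G F = {}"
proof (rule equals0I)
  fix i assume "G \<subseteq> F" "i \<in> ominus G F"
  then have "i \<in> G" "i \<in> F" "verts (component G i) \<inter> verts F = {}"
    using mem_ominus_iff by auto
  moreover have "edge_verts i \<subseteq> verts (component G i)"
    using self_in_component edge_verts_subset_verts by metis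
  ultimately show False
    using edge_verts_subset_verts[of i F] edge_verts_nonempty by blast
qed

lemma ncomp_empty: "ncomp {} = 0"
  unfolding ncomp_def components_def by simp

lemma component_Un_subset:
  assumes "A \<subseteq> F" and "i \<in> B" and "verts (component B i) \<inter> verts F = {}"
  shows "component (A \<union> B) i \<subseteq> component B i"
proof
  fix k assume "k \<in> component (A \<union> B) i"
  then have "(i, k) \<in> (share (A \<union> B))\<^sup>*" unfolding component_def by simp
  then show "k \<in> component B i"
  proof (induction rule: rtrancl_induct)
    case base
    show ?case by (rule self_in_component)
  next
    case (step j k)
    have "j \<in> B" using component_subset[OF assms(2)] step.IH by blast
    from step.hyps(2) have "k \<in> A \<union> B" and meet: "edge_verts j \<inter> edge_verts k \<noteq> {}"
      unfolding share_def by auto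
    moreover have "edge_verts j \<subseteq> verts (component B i)"
      using step.IH edge_verts_subset_verts by blast
    moreover have "k \<in> A \<Longrightarrow> edge_verts k \<subseteq> verts F"
      using assms(1) edge_verts_subset_verts by blast
    ultimately have "k \<in> B" using assms(3) by blast
    with \<open>j \<in> B\<close> meet have "(j, k) \<in> share B" unfolding share_def by auto
    with step.IH show ?case unfolding component_def by auto
  qed
qed

lemma ominus_Un_absorb: "A \<subseteq> F \<Longrightarrow> ominus (A \<union> B) F = ominus B F"
proof (intro set_eqI iffI)
  fix i assume "A \<subseteq> F" and "i \<in> ominus (A \<union> B) F"
  then have i: "i \<in> A \<union> B" "verts (component (A \<union> B) i) \<inter> verts F = {}"
    using mem_ominus_iff by auto
  have "edge_verts i \<subseteq> verts (component (A \<union> B) i)"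
    using self_in_component edge_verts_subset_verts by metis
  then have "i \<notin> A"
    using i \<open>A \<subseteq> F\<close> edge_verts_subset_verts[of i F] edge_verts_nonempty by blast
  moreover have "verts (component B i) \<subseteq> verts (component (A \<union> B) i)"
    by (intro verts_mono component_mono) auto
  ultimately show "i \<in> ominus B F" using i mem_ominus_iff by blast
next
  fix i assume "A \<subseteq> F" and "i \<in> ominus B F"
  then have i: "i \<in> B" "verts (component B i) \<inter> verts F = {}"
    using mem_ominus_iff by auto
  then have "verts (component (A \<union> B) i) \<subseteq> verts (component B i)"
    using verts_mono component_Un_subset[OF \<open>A \<subseteq> F\<close>] by blast
  then show "i \<in> ominus (A \<union> B) F" using i mem_ominus_iff by blast
qed

lemma vDelta_snoc: "vDelta (Hs @ [H]) F = vDelta Hs F + ncomp (ominus H (F \<union> \<Union>(set Hs)))"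
  by (induction Hs arbitrary: F) (auto simp: sup_assoc)

lemma vDelta_snoc_subset: "H \<subseteq> F \<Longrightarrow> vDelta (Hs @ [H]) F = vDelta Hs F"
proof -
  assume "H \<subseteq> F"
  then have "ominus H (F \<union> \<Union>(set Hs)) = {}" by (intro ominus_eq_empty_if_subset) auto
  then show ?thesis by (simp add: vDelta_snoc ncomp_empty)
qed

lemma Union_set_branch: "bs \<in> branches t \<Longrightarrow> \<Union>(set bs) = label t"
  by (induction t arbitrary: bs) fastforce+

lemma finite_branches: "finite (branches t)"
  by (induction t) auto

lemma branches_nonempty: "branches t \<noteq> {}"
  by (induction t) auto

lemma branches_Node_commute: "branches (Node l r) = branches (Node r l)"
  by auto

definition Psi_candidates :: "jtree \<Rightarrow> nat set" where
  "Psi_candidates S = {vDelta Cs {} | Cs bs. bs \<in> branches S \<and> distinct Cs \<and> set Cs = set bs}"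

lemma finite_Psi_candidates: "finite (Psi_candidates S)"
proof -
  have "Psi_candidates S \<subseteq>
      (\<lambda>Cs. vDelta Cs {}) ` (\<Union>bs\<in>branches S. {Cs. set Cs \<subseteq> set bs \<and> distinct Cs})"
    unfolding Psi_candidates_def by blast
  moreover have "finite (\<Union>bs\<in>branches S. {Cs. set Cs \<subseteq> set bs \<and> distinct Cs})"
    using finite_branches finite_subset_distinct by blast
  ultimately show ?thesis using finite_subset by blast
qed

lemma Psi_candidates_nonempty: "Psi_candidates S \<noteq> {}"
proof -
  obtain bs where "bs \<in> branches S" using branches_nonempty by blast
  then have "vDelta (remdups bs) {} \<in> Psi_candidates S"
    unfolding Psi_candidates_def by fastforce
  then show ?thesis by blast
qed

lemma Psi_ge:
  "bs \<in> branches S \<Longrightarrow> distinct Cs \<Longrightarrow> set Cs = set bs \<Longrightarrow> vDelta Cs {} \<le> Psi S"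
  unfolding Psi_def using finite_Psi_candidates[of S] unfolding Psi_candidates_def
  by (intro Max_ge) blast+

lemma Psi_attained:
  obtains Cs bs where "bs \<in> branches S" "distinct Cs" "set Cs = set bs" "Psi S = vDelta Cs {}"
proof -
  have "Psi S \<in> Psi_candidates S"
    unfolding Psi_def Psi_candidates_def[symmetric]
    using finite_Psi_candidates Psi_candidates_nonempty by (rule Max_in)
  then show ?thesis using that unfolding Psi_candidates_def by blast
qed

lemma Psi_Node_ge_left: "Psi l + ncomp (ominus (label r) (label l)) \<le> Psi (Node l r)"
proof -
  obtain Cs bs where Cs: "bs \<in> branches l" "distinct Cs" "set Cs = set bs" "Psi l = vDelta Cs {}"
    using Psi_attained .
  have branch: "label r # bs \<in> branches (Node l r)" using Cs(1) by auto
  have covered: "\<Union>(set Cs) = label l" using Cs(3) Union_set_branch[OF Cs(1)] by simp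
  show ?thesis
  proof (cases "label r \<in> set bs")
    case True
    then have "ominus (label r) (label l) = {}"
      using covered Cs(3) by (intro ominus_eq_empty_if_subset) blast
    moreover have "vDelta Cs {} \<le> Psi (Node l r)"
      using Psi_ge[OF branch Cs(2)] Cs(3) True by auto
    ultimately show ?thesis using Cs(4) by (simp add: ncomp_empty)
  next
    case False
    then have "vDelta (Cs @ [label r]) {} \<le> Psi (Node l r)"
      using Psi_ge[OF branch] Cs(2,3) by auto
    then show ?thesis using Cs(4) covered by (simp add: vDelta_snoc)
  qed
qed

lemma Psi_Node_commute: "Psi (Node l r) = Psi (Node r l)"
  unfolding Psi_def branches_Node_commute ..

lemma Psi_Node_ge_right: "Psi r + ncomp (ominus (label l) (label r)) \<le> Psi (Node l r)"
  using Psi_Node_ge_left[of r l] by (simp add: Psi_Node_commute)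

lemma append_two_cases:
  assumes "2 \<le> length xs"
  obtains P a b where "xs = P @ [a, b]"
proof -
  obtain ys b where ys: "xs = ys @ [b]" using assms by (cases xs rule: rev_cases) auto
  then obtain P a where "ys = P @ [a]" using assms by (cases ys rule: rev_cases) auto
  with ys show ?thesis using that by simp
qed

lemma jt_append_two: "jt (P @ [a, b]) = Node (jt (P @ [a])) (jt (P @ [b]))"
proof -
  obtain x y ys where xs: "P @ [a, b] = x # y # ys"
    by (cases P; cases "tl P @ [a, b]") auto
  have "butlast (P @ [a, b]) = P @ [a]"
    and "butlast (butlast (P @ [a, b])) @ [last (P @ [a, b])] = P @ [b]"
    by (simp_all add: butlast_append)
  then show ?thesis unfolding xs jt.simps(3) by (simp only: xs[symmetric])
qed

lemma label_jt: "label (jt Ts) = (\<Union>t\<in>set Ts. label t)"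
proof (induction Ts rule: jt.induct)
  case (3 t1 t2 ts)
  obtain P a b where "t1 # t2 # ts = P @ [a, b]"
    using append_two_cases[of "t1 # t2 # ts"] by auto
  with 3 show ?case by (auto simp: jt_append_two butlast_append)
qed simp_all

lemma label_jt_snoc: "label (jt (P @ [a])) = label (jt P) \<union> label a"
  by (auto simp: label_jt)

lemma Psi_jt_append_two_ge_left:
  "Psi (jt (P @ [a])) + ncomp (ominus (label b) (label (jt (P @ [a])))) \<le> Psi (jt (P @ [a, b]))"
  using Psi_Node_ge_left[of "jt (P @ [a])" "jt (P @ [b])"]
    ominus_Un_absorb[of "label (jt P)" "label (jt (P @ [a]))" "label b"]
  by (simp add: jt_append_two label_jt_snoc)

lemma Psi_jt_append_two_ge_right:
  "Psi (jt (P @ [b])) + ncomp (ominus (label a) (label (jt (P @ [b])))) \<le> Psi (jt (P @ [a, b]))"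
  using Psi_Node_ge_right[of "jt (P @ [b])" "jt (P @ [a])"]
    ominus_Un_absorb[of "label (jt P)" "label (jt (P @ [b]))" "label a"]
  by (simp add: jt_append_two label_jt_snoc)

theorem Psi_jt_ge:
  assumes "j < length Ts"
  shows "Psi (Ts ! j) + vDelta (map label Ts) (label (Ts ! j)) \<le> Psi (jt Ts)"
  using assms
proof (induction "length Ts" arbitrary: Ts j rule: less_induct)
  case less
  show ?case
  proof (cases "length Ts = 1")
    case True
    then obtain t where "Ts = [t]" by (cases Ts) auto
    then show ?thesis
      using less.prems ominus_eq_empty_if_subset by (simp add: ncomp_empty)
  next
    case False
    then obtain P a b where Ts: "Ts = P @ [a, b]"
      using less.prems append_two_cases[of Ts] by fastforce
    show ?thesis
    proof (cases "j \<le> length P")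
      case True
      then have tj: "Ts ! j = (P @ [a]) ! j" and "Ts ! j \<in> set (P @ [a])"
        unfolding Ts by (simp_all add: nth_append)
      then have covered: "label (Ts ! j) \<union> \<Union>(set (map label (P @ [a]))) = label (jt (P @ [a]))"
        unfolding label_jt by auto
      have "Psi (Ts ! j) + vDelta (map label (P @ [a])) (label (Ts ! j)) \<le> Psi (jt (P @ [a]))"
        using less.hyps[of "P @ [a]" j] True tj Ts by simp
      moreover have "vDelta (map label Ts) (label (Ts ! j)) =
          vDelta (map label (P @ [a])) (label (Ts ! j))
          + ncomp (ominus (label b) (label (jt (P @ [a]))))"
        using vDelta_snoc[of "map label (P @ [a])" "label b" "label (Ts ! j)"]
        unfolding covered by (simp add: Ts)
      ultimately show ?thesis
        using Psi_jt_append_two_ge_left[of P a b] Ts by simp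
    next
      case False
      then have tj: "Ts ! j = b"
        using less.prems Ts by (simp add: nth_append)
      have "Psi b + vDelta (map label P) (label b) \<le> Psi (jt (P @ [b]))"
        using less.hyps[of "P @ [b]" "length P"] Ts by (simp add: vDelta_snoc_subset)
      moreover have "vDelta (map label Ts) (label b) =
          vDelta (map label P) (label b) + ncomp (ominus (label a) (label (jt (P @ [b]))))"
        using vDelta_snoc_subset[of "label b" "label b" "map label P @ [label a]"]
          vDelta_snoc[of "map label P" "label a" "label b"]
        unfolding Ts by (simp add: label_jt sup_commute)
      ultimately show ?thesis
        using Psi_jt_append_two_ge_right[of P b a] Ts tj by simp
    qed
  qed
qed

theorem corollary5p5:
  fixes Ts :: "jtree list" and Gs :: "pgraph list" and j :: nat
  assumes "Ts \<noteq> []"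
    and "length Gs = length Ts"
    and "\<forall>k < length Ts. finite (Gs ! k) \<and> is_join_tree (Gs ! k) (Ts ! k)"
    and "j < length Ts"
  shows "Psi (jt Ts) \<ge> Psi (Ts ! j) + vDelta Gs (Gs ! j)"
proof -
  have "Gs = map label Ts"
    using assms(2,3) unfolding is_join_tree_def by (simp add: list_eq_iff_nth_eq)
  then show ?thesis using Psi_jt_ge[OF assms(4)] assms(4) by simp
qed

end
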